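(* Let $\tilde B^{(r,s)}_{n,k}=[x^ny^k]\frac{1}{x}\mathrm{Rev}\left(\frac{x(1-yx)}{1+rx+sx^2}\right)$ and $\tilde B^{(r,s)}_n(y)=\sum_{k=0}^n\tilde B^{(r,s)}_{n,k}y^k$. Then: (i) the polynomials $\tilde B^{(r,s)}_n(y)$ are the moments of the orthogonal polynomials with coefficient array the Riordan array $$\left(\frac{1+xy}{1+(r+2y)x+(s+ry+y^2)x^2},\ \frac{x}{1+(r+2y)x+(s+ry+y^2)x^2}\right),$$ i.e. the first column of the inverse of this array has generating function $\sum_n\tilde B^{(r,s)}_n(y)x^n$; (ii) $$\sum_{n\ge0}\tilde B^{(r,s)}_n(y)x^n=\cfrac{1}{1-(r+y)x-\cfrac{(s+ry+y^2)x^2}{1-(r+2y)x-\cfrac{(s+ry+y^2)x^2}{1-(r+2y)x-\cdots}}}.$$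
   Context: A Riordan array $(g(x),f(x))$ is the lower-triangular matrix with $(n,k)$ entry $[x^n]g(x)f(x)^k$; moments are the entries of the first column of its inverse. Continued fractions are formal power series limits of convergents. $\mathrm{Rev}$ is compositional inverse in $x$. *)

theory Defs
  imports "HOL-Computational_Algebra.Formal_Power_Series" "HOL-Computational_Algebra.Polynomial"
begin

text \<open>Multiplicative inverse of a power series (meant for series with unit constant term).\<close>
definition fps_uinv :: "'a::comm_ring_1 fps \<Rightarrow> 'a fps" where
  "fps_uinv f = (THE g. f * g = 1)"

definition fps_Rev :: "'a::comm_ring_1 fps \<Rightarrow> 'a fps" where
  "fps_Rev F = (THE G. fps_nth G 0 = 0 \<and> fps_compose F G = fps_X)"

definition riordan :: "'a::comm_ring_1 fps \<Rightarrow> 'a fps \<Rightarrow> nat \<Rightarrow> nat \<Rightarrow> 'a" where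
  "riordan g f n k = fps_nth (g * f ^ k) n"

definition lower_tri :: "(nat \<Rightarrow> nat \<Rightarrow> 'a::zero) \<Rightarrow> bool" where
  "lower_tri A \<longleftrightarrow> (\<forall>n k. n < k \<longrightarrow> A n k = 0)"

definition ltmult :: "(nat \<Rightarrow> nat \<Rightarrow> 'a::comm_ring_1) \<Rightarrow> (nat \<Rightarrow> nat \<Rightarrow> 'a) \<Rightarrow> nat \<Rightarrow> nat \<Rightarrow> 'a" where
  "ltmult A B n k = (\<Sum>j\<le>n. A n j * B j k)"

definition ltid :: "nat \<Rightarrow> nat \<Rightarrow> 'a::comm_ring_1" where
  "ltid n k = (if n = k then 1 else 0)"

text \<open>The variable y, and constants r, s, embedded in the coefficient ring 'a poly.\<close>
definition yv :: "'a::comm_ring_1 poly" where "yv = [:0, 1:]"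

definition Fser :: "'a::comm_ring_1 \<Rightarrow> 'a \<Rightarrow> 'a poly fps" where
  "Fser r s = fps_X * (1 - fps_const yv * fps_X)
      * fps_uinv (1 + fps_const [:r:] * fps_X + fps_const [:s:] * fps_X ^ 2)"

text \<open>Btilde r s n = B~_n^{(r,s)}(y) = sum_k B~_{n,k} y^k, as a polynomial in y:
  the coefficient of x^n in (1/x) Rev(Fser r s).\<close>
definition Btilde :: "'a::comm_ring_1 \<Rightarrow> 'a \<Rightarrow> nat \<Rightarrow> 'a poly" where
  "Btilde r s n = fps_nth (fps_shift 1 (fps_Rev (Fser r s))) n"

text \<open>Convergents of a J-fraction
  1/(1 - a_0 x - b_1 x^2/(1 - a_1 x - b_2 x^2/(...))).
  jconv a b m j is the truncated tail starting at level j, with m further levels.\<close>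
fun jconv :: "(nat \<Rightarrow> 'a::comm_ring_1) \<Rightarrow> (nat \<Rightarrow> 'a) \<Rightarrow> nat \<Rightarrow> nat \<Rightarrow> 'a fps" where
  "jconv a b 0 j = fps_uinv (1 - fps_const (a j) * fps_X)"
| "jconv a b (Suc m) j = fps_uinv (1 - fps_const (a j) * fps_X
      - fps_const (b (Suc j)) * fps_X ^ 2 * jconv a b m (Suc j))"

end

theory Submission
  imports Defs
begin

text \<open>
  Put \<open>u = r + 2y\<close>, \<open>b = s + ry + y\<^sup>2\<close>, \<open>D = 1 + ux + bx\<^sup>2\<close>, and let \<open>C\<close> be the
  solution of \<open>C = 1 + uxC + bx\<^sup>2C\<^sup>2\<close>, i.e. the value of the J-fraction with constant
  coefficients \<open>u, b\<close>. Then \<open>xC\<close> is the compositional inverse of \<open>x/D\<close>, so the Riordan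
  array \<open>((1+yx)/D, x/D)\<close> has inverse \<open>(B, xC)\<close> with \<open>B = C/(1+yxC)\<close>, whose first column
  is \<open>B\<close>. Eliminating \<open>C\<close> shows \<open>B = 1 + rxB + (yx + sx\<^sup>2)B\<^sup>2\<close>, which is precisely the
  statement \<open>Rev(x(1-yx)/(1+rx+sx\<^sup>2)) = xB\<close>. Finally \<open>B\<close> itself satisfies
  \<open>B = 1/(1 - (r+y)x - bx\<^sup>2C)\<close>, so it is the J-fraction of part (ii); its convergents agree
  with the tail solutions to ever higher order in \<open>x\<close>.
\<close>

subsection \<open>Power series over commutative rings\<close>

unbundle fps_syntax

lemma fps_uinv_unique:
  fixes f :: "'a::comm_ring_1 fps"
  assumes "f * g = 1"
  shows "fps_uinv f = g"
  unfolding fps_uinv_def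
proof (rule the_equality)
  show "f * g = 1" by fact
  fix h assume "f * h = 1"
  then have "h = (f * h) * g" using assms by (metis mult.assoc mult.commute mult_1_right)
  then show "h = g" using \<open>f * h = 1\<close> by simp
qed

lemma fps_mult_uinv:
  fixes f :: "'a::comm_ring_1 fps"
  assumes "f $ 0 = 1"
  shows "f * fps_uinv f = 1"
  using fps_right_inverse[of f 1] assms by (simp add: fps_uinv_unique)

lemma diff_of_inverses:
  fixes P Q p q :: "'a::comm_ring_1"
  assumes "P * p = 1" "Q * q = 1"
  shows "p - q = p * q * (Q - P)"
proof -
  have "p * q * (Q - P) = p * (Q * q) - q * (P * p)" by (simp add: algebra_simps)
  then show ?thesis using assms by simp
qed

text \<open>Two solutions satisfy \<open>K - L = (K - L)(a + q(K + L))\<close>, and \<open>1 - a - q(K + L)\<close> is a unit.\<close>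

lemma fps_quadratic_unique:
  fixes K L a q :: "'a::comm_ring_1 fps"
  assumes "a $ 0 = 0" "q $ 0 = 0"
    and K: "K = 1 + a * K + q * K ^ 2" and L: "L = 1 + a * L + q * L ^ 2"
  shows "K = L"
proof -
  define W where "W = a + q * (K + L)"
  have "(1 + a * K + q * K ^ 2) - (1 + a * L + q * L ^ 2) = (K - L) * W"
    by (simp add: W_def algebra_simps power2_eq_square)
  then have "(K - L) * (1 - W) = 0"
    unfolding K[symmetric] L[symmetric] by (simp add: algebra_simps)
  then have "(K - L) * ((1 - W) * fps_uinv (1 - W)) = 0"
    by (metis mult.assoc mult_zero_left)
  moreover have "(1 - W) * fps_uinv (1 - W) = 1"
    by (rule fps_mult_uinv) (simp add: W_def assms(1,2))
  ultimately show "K = L" by simp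
qed

lemma fps_X_power_dvd_nth:
  fixes f :: "'a::comm_ring_1 fps"
  assumes "fps_X ^ k dvd f" "n < k"
  shows "f $ n = 0"
  using assms by (auto simp: fps_X_power_mult_nth elim!: dvdE)

text \<open>The library proves the following two facts for integral domains only; the argument
  works verbatim over any commutative ring.\<close>

lemma fps_compose_mult_distrib':
  fixes a b c :: "'a::comm_ring_1 fps"
  assumes c0: "c $ 0 = 0"
  shows "(a * b) oo c = (a oo c) * (b oo c)"
proof (rule fps_ext)
  fix n
  let ?S = "{(k::nat, m::nat). k + m \<le> n}"
  have fin: "finite ?S"
    by (rule finite_subset[of _ "{0..n} \<times> {0..n}"]) auto
  have "((a oo c) * (b oo c)) $ n
      = (\<Sum>i = 0..n. \<Sum>k = 0..i. \<Sum>m = 0..n - i. a $ k * c ^ k $ i * (b $ m * c ^ m $ (n - i)))"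
    by (simp add: fps_mult_nth fps_compose_nth sum_product)
  also have "\<dots> = (\<Sum>i = 0..n. \<Sum>(k, m)\<in>?S. a $ k * c ^ k $ i * (b $ m * c ^ m $ (n - i)))"
  proof (rule sum.cong[OF refl])
    fix i assume "i \<in> {0..n}"
    show "(\<Sum>k = 0..i. \<Sum>m = 0..n - i. a $ k * c ^ k $ i * (b $ m * c ^ m $ (n - i)))
        = (\<Sum>(k, m)\<in>?S. a $ k * c ^ k $ i * (b $ m * c ^ m $ (n - i)))"
      unfolding sum.cartesian_product
      using \<open>i \<in> {0..n}\<close> by (intro sum.mono_neutral_left[OF fin]; auto)
        (metis leI mult_zero_left mult_zero_right startsby_zero_power_prefix[OF c0])+
  qed
  also have "\<dots> = (\<Sum>(k, m)\<in>?S. a $ k * b $ m * (c ^ k * c ^ m) $ n)"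
    by (subst sum.swap) (auto simp: fps_mult_nth sum_distrib_left ac_simps intro!: sum.cong)
  also have "\<dots> = ((a * b) oo c) $ n"
    unfolding power_add[symmetric]
      sum_pair_less_iff[where a = "\<lambda>k. a $ k" and b = "\<lambda>m. b $ m" and c = "\<lambda>s. (c ^ s) $ n" and n = n]
    by (simp add: fps_compose_nth fps_mult_nth sum_distrib_right)
  finally show "((a * b) oo c) $ n = ((a oo c) * (b oo c)) $ n" ..
qed

lemma fps_compose_power':
  fixes a c :: "'a::comm_ring_1 fps"
  assumes "c $ 0 = 0"
  shows "(a ^ k) oo c = (a oo c) ^ k"
  by (induction k) (simp_all add: fps_compose_mult_distrib'[OF assms])

lemma fps_compose_uinv:
  fixes f c :: "'a::comm_ring_1 fps"
  assumes "c $ 0 = 0" "f $ 0 = 1"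
  shows "(f oo c) * (fps_uinv f oo c) = 1"
  using fps_compose_mult_distrib'[OF assms(1), of f "fps_uinv f"] fps_mult_uinv[OF assms(2)]
  by simp

lemmas fps_compose_simps =
  fps_compose_add_distrib fps_compose_sub_distrib fps_compose_mult_distrib' fps_compose_power'

lemma fps_compose_nth_atMost:
  fixes A a :: "'a::comm_ring_1 fps"
  assumes "a $ 0 = 0" "m \<le> n"
  shows "(A oo a) $ m = (\<Sum>i\<le>n. A $ i * (a ^ i) $ m)"
  unfolding fps_compose_nth atLeast0AtMost
  using assms startsby_zero_power_prefix[OF assms(1)] by (intro sum.mono_neutral_left) auto

lemma fps_mult_compose_nth:
  fixes g A a :: "'a::comm_ring_1 fps"
  assumes "a $ 0 = 0"
  shows "(g * (A oo a)) $ n = (\<Sum>j\<le>n. A $ j * (g * a ^ j) $ n)"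
proof -
  have "(g * (A oo a)) $ n = (\<Sum>m=0..n. \<Sum>i\<le>n. A $ i * (g $ m * (a ^ i) $ (n - m)))"
    unfolding fps_mult_nth
    by (intro sum.cong refl) (simp add: fps_compose_nth_atMost[OF assms, of _ n] sum_distrib_left ac_simps)
  also have "\<dots> = (\<Sum>j\<le>n. A $ j * (g * a ^ j) $ n)"
    by (subst sum.swap) (simp add: fps_mult_nth sum_distrib_left)
  finally show ?thesis .
qed

subsection \<open>Riordan arrays\<close>

lemma lower_tri_riordan: "lower_tri (riordan h (fps_X * (E :: 'a::comm_ring_1 fps)))"
  unfolding lower_tri_def riordan_def
proof (intro allI impI)
  fix n k :: nat assume "n < k"
  have "h * (fps_X * E) ^ k = fps_X ^ k * (h * E ^ k)" by (simp add: power_mult_distrib ac_simps)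
  then show "(h * (fps_X * E) ^ k) $ n = 0" using \<open>n < k\<close> by (simp add: fps_X_power_mult_nth)
qed

lemma ltmult_riordan:
  fixes g a h l :: "'a::comm_ring_1 fps"
  assumes "a $ 0 = 0"
  shows "ltmult (riordan g a) (riordan h l) n k = (g * ((h * l ^ k) oo a)) $ n"
  unfolding ltmult_def riordan_def fps_mult_compose_nth[OF assms] by (simp add: ac_simps)

lemma ltmult_riordan_eq_ltid:
  fixes g a h l :: "'a::comm_ring_1 fps"
  assumes "a $ 0 = 0" "g * (h oo a) = 1" "l oo a = fps_X"
  shows "ltmult (riordan g a) (riordan h l) = ltid"
proof (intro ext)
  fix n k
  have "g * ((h * l ^ k) oo a) = fps_X ^ k"
    using assms by (simp add: fps_compose_simps mult.assoc[symmetric])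
  then show "ltmult (riordan g a) (riordan h l) n k = ltid n k"
    by (simp add: ltmult_riordan[OF assms(1)] ltid_def)
qed

lemma ltmult_assoc:
  fixes A B C :: "nat \<Rightarrow> nat \<Rightarrow> 'a::comm_ring_1"
  assumes "lower_tri B"
  shows "ltmult A (ltmult B C) = ltmult (ltmult A B) C"
proof (intro ext)
  fix n k
  have "ltmult (ltmult A B) C n k = (\<Sum>j\<le>n. \<Sum>i\<le>n. A n j * B j i * C i k)"
    by (simp add: ltmult_def sum_distrib_right) (rule sum.swap)
  also have "\<dots> = (\<Sum>j\<le>n. \<Sum>i\<le>j. A n j * B j i * C i k)"
    using assms unfolding lower_tri_def
    by (intro sum.cong refl sum.mono_neutral_right) auto
  also have "\<dots> = ltmult A (ltmult B C) n k"
    by (simp add: ltmult_def sum_distrib_left ac_simps)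
  finally show "ltmult A (ltmult B C) n k = ltmult (ltmult A B) C n k" by simp
qed

lemma ltmult_ltid_left: "ltmult ltid M = (M :: nat \<Rightarrow> nat \<Rightarrow> 'a::comm_ring_1)"
  by (intro ext) (simp add: ltmult_def ltid_def if_distrib[of "\<lambda>x. x * _"] cong: if_cong)

lemma ltmult_ltid_right:
  fixes M :: "nat \<Rightarrow> nat \<Rightarrow> 'a::comm_ring_1"
  assumes "lower_tri M"
  shows "ltmult M ltid = M"
proof (intro ext)
  fix n k
  show "ltmult M ltid n k = M n k"
    unfolding ltmult_def ltid_def
    by (subst sum.cong[OF refl, of _ _ "\<lambda>j. if j = k then M n k else 0"])
       (use assms in \<open>auto simp: lower_tri_def\<close>)
qed

lemma ltmult_inverse_unique:
  fixes M M' R :: "nat \<Rightarrow> nat \<Rightarrow> 'a::comm_ring_1"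
  assumes "lower_tri M'" "lower_tri R" "ltmult M' R = ltid" "ltmult R M = ltid"
  shows "M' = M"
proof -
  have "M' = ltmult M' (ltmult R M)" using assms(1,4) by (simp add: ltmult_ltid_right)
  also have "\<dots> = M" using assms(2,3) by (simp add: ltmult_assoc ltmult_ltid_left)
  finally show ?thesis .
qed

subsection \<open>The J-fraction with constant coefficients\<close>

text \<open>For \<open>u = b = 1\<close> these are the Motzkin numbers.\<close>

fun motzkin_coeff :: "'a::comm_ring_1 \<Rightarrow> 'a \<Rightarrow> nat \<Rightarrow> 'a" where
  "motzkin_coeff u b 0 = 1"
| "motzkin_coeff u b (Suc n) =
     u * motzkin_coeff u b n + b * (\<Sum>i<n. motzkin_coeff u b i * motzkin_coeff u b (n - 1 - i))"

definition motzkin_fps :: "'a::comm_ring_1 \<Rightarrow> 'a \<Rightarrow> 'a fps" where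
  "motzkin_fps u b = Abs_fps (motzkin_coeff u b)"

lemma motzkin_fps_eq:
  fixes u b :: "'a::comm_ring_1"
  defines "C \<equiv> motzkin_fps u b"
  shows "C = 1 + fps_const u * fps_X * C + fps_const b * fps_X ^ 2 * C ^ 2"
proof (rule fps_ext)
  fix n
  show "C $ n = (1 + fps_const u * fps_X * C + fps_const b * fps_X ^ 2 * C ^ 2) $ n"
  proof (cases n)
    case (Suc m)
    have "(fps_const b * fps_X ^ 2 * C ^ 2) $ Suc m = b * (\<Sum>i<m. C $ i * C $ (m - 1 - i))"
    proof (cases m)
      case (Suc k)
      have "(fps_const b * fps_X ^ 2 * C ^ 2) $ Suc m = b * (C ^ 2) $ k"
        using Suc by (simp add: mult.assoc fps_X_power_mult_nth)
      also have "(C ^ 2) $ k = (\<Sum>i=0..k. C $ i * C $ (k - i))"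
        by (simp add: power2_eq_square fps_mult_nth)
      finally show ?thesis using Suc by (simp add: atLeast0AtMost lessThan_Suc_atMost)
    qed (simp add: mult.assoc fps_X_power_mult_nth)
    then show ?thesis using Suc by (simp add: C_def motzkin_fps_def mult.assoc)
  qed (simp add: C_def motzkin_fps_def)
qed

lemma motzkin_fps_fixpoint:
  fixes u b :: "'a::comm_ring_1"
  defines "C \<equiv> motzkin_fps u b"
  shows "(1 - fps_const u * fps_X - fps_const b * fps_X ^ 2 * C) * C = 1"
proof -
  have C: "C = 1 + (fps_const u * fps_X * C + fps_const b * fps_X ^ 2 * C ^ 2)"
    using motzkin_fps_eq[of u b, folded C_def] by (metis add.assoc)
  have "(1 - fps_const u * fps_X - fps_const b * fps_X ^ 2 * C) * C
      = C - (fps_const u * fps_X * C + fps_const b * fps_X ^ 2 * C ^ 2)"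
    by (simp add: algebra_simps power2_eq_square)
  also have "\<dots> = 1" using C by (metis add_diff_cancel_right')
  finally show ?thesis .
qed

text \<open>\<open>D(xC) = C\<close> is the defining equation of \<open>C\<close>; \<open>C(x/D) = D\<close> holds because \<open>D\<close> also
  solves the quadratic satisfied by \<open>C \<circ> (x/D)\<close>.\<close>

lemma motzkin_fps_compose:
  fixes u b :: "'a::comm_ring_1"
  defines "D \<equiv> 1 + fps_const u * fps_X + fps_const b * fps_X ^ 2"
    and "C \<equiv> motzkin_fps u b"
  shows "D oo (fps_X * C) = C" and "C oo (fps_X * fps_uinv D) = D"
proof -
  define f where "f = fps_X * fps_uinv D"
  have f0: "f $ 0 = 0" by (simp add: f_def)
  have "f * D = fps_X * (D * fps_uinv D)" by (simp add: f_def ac_simps)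
  then have fD: "f * D = fps_X" by (simp add: fps_mult_uinv D_def)
  have C: "C = 1 + fps_const u * fps_X * C + fps_const b * fps_X ^ 2 * C ^ 2"
    unfolding C_def by (rule motzkin_fps_eq)
  show "D oo (fps_X * C) = C"
    by (subst (2) C) (simp add: D_def fps_compose_simps power_mult_distrib ac_simps)
  show "C oo (fps_X * fps_uinv D) = D"
    unfolding f_def[symmetric]
  proof (rule fps_quadratic_unique)
    show "C oo f = 1 + fps_const u * f * (C oo f) + fps_const b * f ^ 2 * (C oo f) ^ 2"
      by (subst C) (simp add: fps_compose_simps f0)
    have "1 + fps_const u * f * D + fps_const b * f ^ 2 * D ^ 2
        = 1 + fps_const u * (f * D) + fps_const b * (f * D) ^ 2"
      by (simp add: power_mult_distrib ac_simps)
    also have "\<dots> = D" unfolding fD by (simp add: D_def)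
    finally show "D = 1 + fps_const u * f * D + fps_const b * f ^ 2 * D ^ 2" by (rule sym)
  qed (simp_all add: f0 power2_eq_square)
qed

lemma riordan_motzkin_inverse:
  fixes u b c :: "'a::comm_ring_1"
  defines "D \<equiv> 1 + fps_const u * fps_X + fps_const b * fps_X ^ 2"
    and "C \<equiv> motzkin_fps u b"
  defines "R \<equiv> riordan ((1 + fps_const c * fps_X) * fps_uinv D) (fps_X * fps_uinv D)"
    and "M \<equiv> riordan (C * fps_uinv (1 + fps_const c * fps_X * C)) (fps_X * C)"
  shows "ltmult M R = ltid" and "ltmult R M = ltid"
proof -
  define f where "f = fps_X * fps_uinv D"
  define l where "l = fps_X * C"
  define W where "W = fps_uinv (1 + fps_const c * fps_X * C)"
  have f0: "f $ 0 = 0" and l0: "l $ 0 = 0" by (simp_all add: f_def l_def)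
  have D_inv: "D * fps_uinv D = 1" by (rule fps_mult_uinv) (simp add: D_def)
  have W_inv: "(1 + fps_const c * fps_X * C) * W = 1" unfolding W_def by (rule fps_mult_uinv) simp
  have D_l: "D oo l = C" and C_f: "C oo f = D"
    unfolding l_def f_def D_def C_def by (rule motzkin_fps_compose)+
  have "f * D = fps_X * (D * fps_uinv D)" by (simp add: f_def ac_simps)
  then have fD: "f * D = fps_X" using D_inv by simp
  have uinv_D_l: "C * (fps_uinv D oo l) = 1"
    using fps_compose_uinv[OF l0, of D] D_l by (simp add: D_def)
  have W_f: "(1 + fps_const c * fps_X) * (W oo f) = 1"
    using fps_compose_uinv[OF f0, of "1 + fps_const c * fps_X * C"] C_f fD
    by (simp add: W_def fps_compose_simps f0 mult.assoc)
  show "ltmult M R = ltid"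
    unfolding M_def R_def l_def[symmetric] f_def[symmetric] W_def[symmetric]
  proof (rule ltmult_riordan_eq_ltid[OF l0])
    have "(1 + fps_const c * fps_X) * fps_uinv D oo l
        = (1 + fps_const c * fps_X * C) * (fps_uinv D oo l)"
      by (simp add: fps_compose_simps l0 l_def mult.assoc)
    then have "C * W * ((1 + fps_const c * fps_X) * fps_uinv D oo l)
        = ((1 + fps_const c * fps_X * C) * W) * (C * (fps_uinv D oo l))"
      by (simp add: ac_simps)
    then show "C * W * ((1 + fps_const c * fps_X) * fps_uinv D oo l) = 1"
      by (simp add: W_inv uinv_D_l)
    show "f oo l = fps_X"
      using uinv_D_l by (simp add: f_def fps_compose_simps l0 l_def mult.assoc)
  qed
  show "ltmult R M = ltid"
    unfolding M_def R_def l_def[symmetric] f_def[symmetric] W_def[symmetric]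
  proof (rule ltmult_riordan_eq_ltid[OF f0])
    show "(1 + fps_const c * fps_X) * fps_uinv D * (C * W oo f) = 1"
      using W_f D_inv C_f by (simp add: fps_compose_simps f0 ac_simps)
    show "l oo f = fps_X"
      using C_f fD by (simp add: l_def fps_compose_simps f0)
  qed
qed

subsection \<open>Convergents of J-fractions\<close>

lemma jconv_approx:
  fixes a b :: "nat \<Rightarrow> 'a::comm_ring_1" and T :: "nat \<Rightarrow> 'a fps"
  assumes T: "\<And>j. (1 - fps_const (a j) * fps_X - fps_const (b (Suc j)) * fps_X ^ 2 * T (Suc j)) * T j = 1"
  shows "fps_X ^ (2 * m + 2) dvd jconv a b m j - T j"
proof (induction m arbitrary: j)
  case 0
  have "(1 - fps_const (a j) * fps_X) * jconv a b 0 j = 1"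
    by (simp add: fps_mult_uinv)
  then have "jconv a b 0 j - T j = jconv a b 0 j * T j
      * ((1 - fps_const (a j) * fps_X - fps_const (b (Suc j)) * fps_X ^ 2 * T (Suc j))
         - (1 - fps_const (a j) * fps_X))"
    by (rule diff_of_inverses[OF _ T])
  also have "\<dots> = fps_X ^ 2 * - (jconv a b 0 j * T j * fps_const (b (Suc j)) * T (Suc j))"
    by (simp add: algebra_simps)
  finally show ?case by (simp only: mult_zero_right add_0 dvd_triv_left)
next
  case (Suc m)
  have "(1 - fps_const (a j) * fps_X - fps_const (b (Suc j)) * fps_X ^ 2 * jconv a b m (Suc j))
      * jconv a b (Suc m) j = 1"
    by (simp add: fps_mult_uinv)
  then have "jconv a b (Suc m) j - T j = jconv a b (Suc m) j * T j
      * ((1 - fps_const (a j) * fps_X - fps_const (b (Suc j)) * fps_X ^ 2 * T (Suc j))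
         - (1 - fps_const (a j) * fps_X - fps_const (b (Suc j)) * fps_X ^ 2 * jconv a b m (Suc j)))"
    by (rule diff_of_inverses[OF _ T])
  also have "\<dots> = (jconv a b (Suc m) j * T j * fps_const (b (Suc j)))
      * (fps_X ^ 2 * (jconv a b m (Suc j) - T (Suc j)))"
    by (simp add: algebra_simps)
  finally have diff: "jconv a b (Suc m) j - T j = \<dots>" .
  have power: "fps_X ^ (2 * Suc m + 2) = fps_X ^ 2 * fps_X ^ (2 * m + 2)"
    by (subst power_add[symmetric]) simp
  have "fps_X ^ (2 * Suc m + 2) dvd fps_X ^ 2 * (jconv a b m (Suc j) - T (Suc j))"
    unfolding power by (rule mult_dvd_mono[OF dvd_refl Suc.IH])
  then show ?case unfolding diff by (rule dvd_mult)
qed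

lemma jconv_tendsto:
  fixes a b :: "nat \<Rightarrow> 'a::comm_ring_1" and T :: "nat \<Rightarrow> 'a fps"
  assumes "\<And>j. (1 - fps_const (a j) * fps_X - fps_const (b (Suc j)) * fps_X ^ 2 * T (Suc j)) * T j = 1"
  shows "(\<lambda>m. jconv a b m j) \<longlonglongrightarrow> T j"
proof (rule tendsto_fpsI)
  fix n
  have "jconv a b m j $ n = T j $ n" if "n \<le> m" for m
  proof -
    have "fps_X ^ (2 * m + 2) dvd jconv a b m j - T j" by (rule jconv_approx) (rule assms)
    then have "(jconv a b m j - T j) $ n = 0" by (rule fps_X_power_dvd_nth) (use that in simp)
    then show ?thesis by simp
  qed
  then show "eventually (\<lambda>m. jconv a b m j $ n = T j $ n) sequentially"
    unfolding eventually_sequentially by blast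
qed

text \<open>\<open>B = C/(1 + cxC)\<close> satisfies \<open>B = 1/(1 - a\<^sub>0x - bx\<^sup>2C)\<close>: it is the J-fraction whose tails
  from level 1 on are all \<open>C\<close>.\<close>

lemma jconv_motzkin_tendsto:
  fixes a0 c u b :: "'a::comm_ring_1"
  assumes "a0 + c = u"
  defines "C \<equiv> motzkin_fps u b"
  shows "(\<lambda>m. jconv (\<lambda>j. if j = 0 then a0 else u) (\<lambda>_. b) m 0)
           \<longlonglongrightarrow> C * fps_uinv (1 + fps_const c * fps_X * C)"
proof -
  define B where "B = C * fps_uinv (1 + fps_const c * fps_X * C)"
  define Q where "Q = 1 - fps_const u * fps_X - fps_const b * fps_X ^ 2 * C"
  have QC: "Q * C = 1"
    unfolding Q_def C_def by (rule motzkin_fps_fixpoint)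
  have BC: "B * (1 + fps_const c * fps_X * C) = C"
    unfolding B_def by (simp add: fps_mult_uinv mult.assoc mult.commute[of "fps_uinv _"])
  have "(1 - fps_const a0 * fps_X - fps_const b * fps_X ^ 2 * C) * B
      = Q * B + fps_const c * fps_X * B"
    unfolding Q_def assms(1)[symmetric] by (simp add: algebra_simps flip: fps_const_add)
  also have "\<dots> = Q * B + fps_const c * fps_X * B * (Q * C)" by (simp add: QC)
  also have "\<dots> = Q * (B * (1 + fps_const c * fps_X * C))" by (simp add: algebra_simps)
  finally have QB: "(1 - fps_const a0 * fps_X - fps_const b * fps_X ^ 2 * C) * B = 1"
    using BC QC by simp
  have "(\<lambda>m. jconv (\<lambda>j. if j = 0 then a0 else u) (\<lambda>_. b) m 0) \<longlonglongrightarrow> (\<lambda>j::nat. if j = 0 then B else C) 0"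
    by (rule jconv_tendsto[of "\<lambda>j. if j = 0 then a0 else u" "\<lambda>_. b" "\<lambda>j. if j = 0 then B else C" 0])
      (use QB QC in \<open>simp add: Q_def\<close>)
  then show ?thesis by (simp add: B_def)
qed

subsection \<open>The reversion series\<close>

text \<open>With \<open>E = 1 - yxB\<close> one has \<open>CE = B\<close>; multiplying the equation for \<open>C\<close> by \<open>E\<^sup>2\<close> leaves a
  relation in \<open>B\<close> alone.\<close>

lemma quadratic_elimination:
  fixes x y r s B C :: "'a::comm_ring_1"
  assumes C: "C = 1 + (r + 2 * y) * x * C + (s + r * y + y ^ 2) * x ^ 2 * C ^ 2"
    and BC: "B * (1 + y * x * C) = C"
  shows "B = 1 + r * x * B + (y * x + s * x ^ 2) * B ^ 2"
proof -
  define E where "E = 1 - y * x * B"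
  have CE: "C * E = B" using BC by (simp add: E_def algebra_simps)
  have "B * E = C * E * E" by (simp add: CE)
  also have "\<dots> = (1 + (r + 2 * y) * x * C + (s + r * y + y ^ 2) * x ^ 2 * C ^ 2) * E * E"
    by (subst C) simp
  also have "\<dots> = E * E + (r + 2 * y) * x * (C * E) * E + (s + r * y + y ^ 2) * x ^ 2 * (C * E) ^ 2"
    by (simp add: algebra_simps power2_eq_square)
  finally have "B * E = E * E + (r + 2 * y) * x * B * E + (s + r * y + y ^ 2) * x ^ 2 * B ^ 2"
    by (simp add: CE)
  then show ?thesis
    by (simp add: E_def algebra_simps power2_eq_square)
qed

lemma Fser_compose_eq_X_iff:
  fixes r s :: "'a::comm_ring_1" and B :: "'a poly fps"
  shows "Fser r s oo (fps_X * B) = fps_X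
     \<longleftrightarrow> B = 1 + fps_const [:r:] * fps_X * B + (fps_const yv * fps_X + fps_const [:s:] * fps_X ^ 2) * B ^ 2"
    (is "_ \<longleftrightarrow> B = ?rhs")
proof -
  define G where "G = fps_X * B"
  define P where "P = 1 + fps_const [:r:] * fps_X + fps_const [:s:] * fps_X ^ 2"
  define V where "V = fps_uinv P oo G"
  define Q where "Q = 1 + fps_const [:r:] * G + fps_const [:s:] * G ^ 2"
  have G0: "G $ 0 = 0" by (simp add: G_def)
  have QV: "Q * V = 1"
    using fps_compose_uinv[OF G0, of P] by (simp add: P_def Q_def V_def fps_compose_simps G0)
  have F: "Fser r s oo G = G * (1 - fps_const yv * G) * V"
    by (simp add: Fser_def V_def P_def fps_compose_simps G0)
  have "Fser r s oo G = fps_X \<longleftrightarrow> G * (1 - fps_const yv * G) = fps_X * Q"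
  proof
    assume "Fser r s oo G = fps_X"
    have "G * (1 - fps_const yv * G) = G * (1 - fps_const yv * G) * (Q * V)" using QV by simp
    also have "\<dots> = (Fser r s oo G) * Q" by (simp add: F ac_simps)
    finally show "G * (1 - fps_const yv * G) = fps_X * Q"
      using \<open>Fser r s oo G = fps_X\<close> by simp
  next
    assume "G * (1 - fps_const yv * G) = fps_X * Q"
    then have "Fser r s oo G = fps_X * (Q * V)" by (simp add: F mult.assoc)
    then show "Fser r s oo G = fps_X" by (simp add: QV)
  qed
  also have "\<dots> \<longleftrightarrow> fps_X * B = fps_X * ?rhs"
    unfolding G_def Q_def by (simp add: algebra_simps power2_eq_square eq_iff_diff_eq_0[of "fps_X * _"])
  also have "\<dots> \<longleftrightarrow> B = ?rhs"
    by (metis fps_shift_times_fps_X' mult.commute)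
  finally show ?thesis by (simp add: G_def)
qed

lemma fps_Rev_Fser:
  fixes r s :: "'a::comm_ring_1" and B :: "'a poly fps"
  assumes "B = 1 + fps_const [:r:] * fps_X * B + (fps_const yv * fps_X + fps_const [:s:] * fps_X ^ 2) * B ^ 2"
  shows "fps_Rev (Fser r s) = fps_X * B"
  unfolding fps_Rev_def
proof (rule the_equality)
  show "(fps_X * B) $ 0 = 0 \<and> Fser r s oo (fps_X * B) = fps_X"
    using assms by (simp add: Fser_compose_eq_X_iff)
  fix G assume G: "G $ 0 = 0 \<and> Fser r s oo G = fps_X"
  have "G = fps_X * fps_shift 1 G"
    by (rule fps_ext) (use G in \<open>auto simp: nat.split_sels(1)\<close>)
  moreover have "fps_shift 1 G = B"
  proof (rule fps_quadratic_unique[where a = "fps_const [:r:] * fps_X"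
        and q = "fps_const yv * fps_X + fps_const [:s:] * fps_X ^ 2"])
    show "fps_shift 1 G = 1 + fps_const [:r:] * fps_X * fps_shift 1 G
        + (fps_const yv * fps_X + fps_const [:s:] * fps_X ^ 2) * fps_shift 1 G ^ 2"
      using G \<open>G = fps_X * fps_shift 1 G\<close> Fser_compose_eq_X_iff[of r s "fps_shift 1 G"] by simp
  qed (use assms in simp_all)
  ultimately show "G = fps_X * B" by simp
qed

lemma Btilde_fps:
  fixes r s :: "'a::comm_ring_1"
  defines "C \<equiv> motzkin_fps ([:r:] + 2 * yv) ([:s:] + [:r:] * yv + yv ^ 2)"
  shows "Abs_fps (Btilde r s) = C * fps_uinv (1 + fps_const yv * fps_X * C)"
proof -
  define B where "B = C * fps_uinv (1 + fps_const yv * fps_X * C)"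
  have "B = 1 + fps_const [:r:] * fps_X * B + (fps_const yv * fps_X + fps_const [:s:] * fps_X ^ 2) * B ^ 2"
  proof (rule quadratic_elimination)
    have coeffs: "fps_const ([:r:] + 2 * yv) = fps_const [:r:] + 2 * fps_const (yv :: 'a poly)"
      "fps_const ([:s:] + [:r:] * yv + yv ^ 2)
        = fps_const [:s:] + fps_const [:r:] * fps_const yv + fps_const (yv :: 'a poly) ^ 2"
      by (simp_all add: numeral_fps_const fps_const_mult fps_const_power)
    from motzkin_fps_eq[of "[:r:] + 2 * yv" "[:s:] + [:r:] * yv + yv ^ 2", folded C_def]
    show "C = 1 + (fps_const [:r:] + 2 * fps_const yv) * fps_X * C
        + (fps_const [:s:] + fps_const [:r:] * fps_const yv + fps_const yv ^ 2) * fps_X ^ 2 * C ^ 2"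
      unfolding coeffs .
    show "B * (1 + fps_const yv * fps_X * C) = C"
      unfolding B_def by (simp add: fps_mult_uinv mult.assoc mult.commute[of "fps_uinv _"])
  qed
  then have "fps_Rev (Fser r s) = fps_X * B" by (rule fps_Rev_Fser)
  then show ?thesis
    unfolding B_def[symmetric] by (intro fps_ext) (simp add: Btilde_def)
qed

theorem mainTheorem15:
  fixes r s :: "'a::comm_ring_1"
  defines "y \<equiv> (yv :: 'a poly)"
  defines "D \<equiv> 1 + fps_const ([:r:] + 2 * y) * fps_X
                 + fps_const ([:s:] + [:r:] * y + y ^ 2) * fps_X ^ 2"
  defines "R \<equiv> riordan ((1 + fps_const y * fps_X) * fps_uinv D) (fps_X * fps_uinv D)"
  defines "B \<equiv> Abs_fps (Btilde r s)"
  shows "((\<exists>M. lower_tri M \<and> ltmult M R = ltid \<and> ltmult R M = ltid)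
          \<and> (\<forall>M. lower_tri M \<and> ltmult M R = ltid \<and> ltmult R M = ltid
                 \<longrightarrow> Abs_fps (\<lambda>n. M n 0) = B))
       \<and> (\<lambda>m. jconv (\<lambda>j. if j = 0 then [:r:] + y else [:r:] + 2 * y)
                     (\<lambda>j. [:s:] + [:r:] * y + y ^ 2) m 0) \<longlonglongrightarrow> B"
proof -
  define C where "C = motzkin_fps ([:r:] + 2 * y) ([:s:] + [:r:] * y + y ^ 2)"
  define M where "M = riordan (C * fps_uinv (1 + fps_const y * fps_X * C)) (fps_X * C)"
  have B: "B = C * fps_uinv (1 + fps_const y * fps_X * C)"
    unfolding B_def C_def y_def by (rule Btilde_fps)
  have MR: "ltmult M R = ltid" and RM: "ltmult R M = ltid"
    unfolding M_def R_def D_def C_def by (rule riordan_motzkin_inverse)+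
  show ?thesis
  proof (intro conjI allI impI)
    show "\<exists>M. lower_tri M \<and> ltmult M R = ltid \<and> ltmult R M = ltid"
      using MR RM unfolding M_def by (blast intro: lower_tri_riordan)
    fix M' assume M': "lower_tri M' \<and> ltmult M' R = ltid \<and> ltmult R M' = ltid"
    have "lower_tri R" unfolding R_def by (rule lower_tri_riordan)
    with M' RM have "M' = M" by (blast intro: ltmult_inverse_unique)
    then show "Abs_fps (\<lambda>n. M' n 0) = B" by (simp add: B M_def riordan_def fps_nth_inverse)
  next
    show "(\<lambda>m. jconv (\<lambda>j. if j = 0 then [:r:] + y else [:r:] + 2 * y)
        (\<lambda>j. [:s:] + [:r:] * y + y ^ 2) m 0) \<longlonglongrightarrow> B"
      unfolding B C_def by (rule jconv_motzkin_tendsto) (simp only: mult_2 add.assoc)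
  qed
qed

end
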